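(* Let $n\ge2$ and $f\in\mathbf{SB}_n$ with $\mathcal{AI}(f)=\lceil n/2\rceil$. Then $\deg(f)\ge 2^{\lfloor\log_2(n-1)\rfloor}$.
   Context: $\mathbf{SB}_n$ is the set of symmetric Boolean functions on $n$ variables; $\deg$ is the algebraic degree. The algebraic immunity is $\mathcal{AI}(f)=\min\{\deg(g): g\neq0,\ gf=0 \text{ or } g(f+1)=0\}$. *)

theory Defs
  imports Complex_Main
begin

text \<open>A Boolean function on n variables is modelled as a predicate on subsets of
  {..<n}: the input vector x in F_2^n is identified with its support
  {i. x_i = 1}. Only the values on subsets of {..<n} are relevant.\<close>

type_synonym boolfun = "nat set \<Rightarrow> bool"

text \<open>ANF coefficient (Moebius transform) over F_2:
  a_S = XOR over T subseteq S of f(T).\<close>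
definition anf_coeff :: "boolfun \<Rightarrow> nat set \<Rightarrow> bool" where
  "anf_coeff f S = odd (card {T. T \<subseteq> S \<and> f T})"

definition alg_deg :: "nat \<Rightarrow> boolfun \<Rightarrow> nat" where
  "alg_deg n f = Max ({card S | S. S \<subseteq> {..<n} \<and> anf_coeff f S} \<union> {0})"

definition symmetric_bf :: "nat \<Rightarrow> boolfun \<Rightarrow> bool" where
  "symmetric_bf n f \<longleftrightarrow>
     (\<forall>x y. x \<subseteq> {..<n} \<longrightarrow> y \<subseteq> {..<n} \<longrightarrow> card x = card y \<longrightarrow> f x = f y)"

definition nonzero_bf :: "nat \<Rightarrow> boolfun \<Rightarrow> bool" where
  "nonzero_bf n g \<longleftrightarrow> (\<exists>x. x \<subseteq> {..<n} \<and> g x)"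

definition annihilates :: "nat \<Rightarrow> boolfun \<Rightarrow> boolfun \<Rightarrow> bool" where
  "annihilates n g h \<longleftrightarrow> (\<forall>x. x \<subseteq> {..<n} \<longrightarrow> \<not> (g x \<and> h x))"

definition alg_immunity :: "nat \<Rightarrow> boolfun \<Rightarrow> nat" where
  "alg_immunity n f = (LEAST d. \<exists>g. nonzero_bf n g \<and>
      (annihilates n g f \<or> annihilates n g (\<lambda>x. \<not> f x)) \<and> alg_deg n g = d)"

end

theory Submission
  imports Defs "HOL-Library.Discrete_Functions"
begin

(*
  A symmetric function f is determined by its value vector v, v(j) = f(x) for
  inputs x of weight j, and its ANF coefficient at S is the |S|-th binary
  difference of v at 0.  Since the 2^s-th difference of v is v(j) XOR v(j + 2^s),
  statements about the degree become periodicity statements about v: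
  deg f < 2^k forces v to be 2^k-periodic on 0..n; a 2^s-periodic weight sequence
  gives a function of degree < 2^s; a sequence with v(j) \<noteq> v(j + 2^s) gives
  degree \<le> 2^s.
*)

section \<open>Subset counting over F_2\<close>

lemma card_subsets_insert:
  assumes "finite S" "a \<notin> S"
  shows "card {T. T \<subseteq> insert a S \<and> P T} =
         card {T. T \<subseteq> S \<and> P T} + card {T. T \<subseteq> S \<and> P (insert a T)}"
proof -
  let ?A = "{T. T \<subseteq> S \<and> P T}" and ?B = "{T. T \<subseteq> S \<and> P (insert a T)}"
  have split: "{T. T \<subseteq> insert a S \<and> P T} = ?A \<union> insert a ` ?B"
  proof (intro equalityI subsetI)
    fix T assume T: "T \<in> {T. T \<subseteq> insert a S \<and> P T}"
    show "T \<in> ?A \<union> insert a ` ?B"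
    proof (cases "a \<in> T")
      case True
      then have "T = insert a (T - {a})" by blast
      then show ?thesis using T by (auto intro!: image_eqI[of T _ "T - {a}"])
    qed (use T in auto)
  qed auto
  have "inj_on (insert a) ?B"
    using assms(2) by (auto simp: inj_on_def subset_iff)
  moreover have "?A \<inter> insert a ` ?B = {}" using assms(2) by auto
  ultimately show ?thesis
    unfolding split using assms(1) by (simp add: card_Un_disjoint card_image)
qed

lemma odd_card_add_subsets:
  assumes "finite S"
  shows "odd (card {T. T \<subseteq> S \<and> P T} + card {T. T \<subseteq> S \<and> Q T})
     \<longleftrightarrow> odd (card {T. T \<subseteq> S \<and> P T \<noteq> Q T})"
proof -
  let ?A = "{T. T \<subseteq> S \<and> P T}" and ?B = "{T. T \<subseteq> S \<and> Q T}"
  let ?C = "{T. T \<subseteq> S \<and> P T \<noteq> Q T}"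
  have fin: "finite ?A" "finite ?B" "finite ?C" "finite (?A \<inter> ?B)" using assms by auto
  have "?A \<union> ?B = ?C \<union> (?A \<inter> ?B)" "?C \<inter> (?A \<inter> ?B) = {}" by auto
  then have "card ?A + card ?B = card ?C + 2 * card (?A \<inter> ?B)"
    using card_Un_Int[OF fin(1,2)] card_Un_disjoint[OF fin(3,4)] by simp
  then show ?thesis by simp
qed

section \<open>Binary differences of sequences\<close>

definition delta :: "(nat \<Rightarrow> bool) \<Rightarrow> nat \<Rightarrow> bool" where
  "delta u j \<longleftrightarrow> u j \<noteq> u (Suc j)"

text \<open>Binomial inversion over F_2: the parity of the number of subsets T of S
  with u(|T|) is the |S|-th difference of u at 0.\<close>
lemma odd_card_subsets_delta:
  assumes "finite S"
  shows "odd (card {T. T \<subseteq> S \<and> u (card T)}) = (delta ^^ card S) u 0"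
  using assms
proof (induction S arbitrary: u rule: finite_induct)
  case empty
  have subsets_empty: "{T. T \<subseteq> {} \<and> u (card T)} = (if u 0 then {{}} else {})" by auto
  show ?case unfolding subsets_empty by simp
next
  case (insert a S)
  have "card (insert a T) = Suc (card T)" if "T \<subseteq> S" for T
    using that insert(1,2) by (subst card_insert_disjoint) (auto intro: finite_subset)
  then have "{T. T \<subseteq> S \<and> u (card (insert a T))} = {T. T \<subseteq> S \<and> u (Suc (card T))}"
    by auto
  then have "odd (card {T. T \<subseteq> insert a S \<and> u (card T)})
      = odd (card {T. T \<subseteq> S \<and> delta u (card T)})"
    using card_subsets_insert[OF insert(1,2)] odd_card_add_subsets[OF insert(1)]
    by (simp add: delta_def)
  also have "\<dots> = (delta ^^ card S) (delta u) 0" by (rule insert.IH)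
  also have "\<dots> = (delta ^^ card (insert a S)) u 0"
    using insert(1,2) by (simp add: funpow_Suc_right del: funpow.simps)
  finally show ?case .
qed

lemma delta_pow2: "(delta ^^ (2 ^ s)) u = (\<lambda>j. u j \<noteq> u (j + 2 ^ s))"
proof (induction s arbitrary: u)
  case 0
  show ?case by (simp add: delta_def fun_eq_iff)
next
  case (Suc s)
  have p: "(2::nat) ^ Suc s = 2 ^ s + 2 ^ s" by simp
  show ?case unfolding p funpow_add comp_apply Suc.IH by (auto simp: fun_eq_iff add.assoc)
qed

lemma delta_shift: "(delta ^^ (m + 2 ^ s)) u = (delta ^^ m) (\<lambda>j. u j \<noteq> u (j + 2 ^ s))"
  by (simp only: funpow_add comp_apply delta_pow2)

lemma delta_local:
  assumes "\<forall>j\<le>m. u (k + j) = w (k + j)"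
  shows "(delta ^^ m) u k = (delta ^^ m) w k"
  using assms
proof (induction m arbitrary: u w)
  case (Suc m)
  have "\<forall>j\<le>m. delta u (k + j) = delta w (k + j)"
    using Suc.prems by (auto simp: delta_def simp flip: add_Suc_right)
  then show ?case using Suc.IH by (simp add: funpow_Suc_right del: funpow.simps)
qed simp

lemma delta_const: "(delta ^^ m) (\<lambda>_. c) k \<longleftrightarrow> m = 0 \<and> c"
proof -
  have const: "delta (\<lambda>_. c) = (\<lambda>_. False)" for c by (simp add: delta_def fun_eq_iff)
  have zero: "(delta ^^ m) (\<lambda>_. False) = (\<lambda>_. False)" for m
    by (induction m) (simp_all add: const)
  show ?thesis
    by (cases m) (simp_all add: funpow_Suc_right const zero del: funpow.simps)
qed

lemma delta_first_nonzero:
  assumes "\<forall>j<m. \<not> u (k + j)"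
  shows "(delta ^^ m) u k = u (k + m)"
  using assms
proof (induction m arbitrary: u)
  case (Suc m)
  have "\<forall>j<m. \<not> delta u (k + j)"
    using Suc.prems by (auto simp: delta_def simp flip: add_Suc_right)
  then have "(delta ^^ m) (delta u) k = delta u (k + m)" by (rule Suc.IH)
  moreover have "delta u (k + m) = u (k + Suc m)" using Suc.prems by (simp add: delta_def)
  ultimately show ?case by (simp add: funpow_Suc_right del: funpow.simps)
qed simp

lemma periodic_of_high_delta_vanish:
  assumes vanish: "\<And>i. 2 ^ k \<le> i \<Longrightarrow> i \<le> n \<Longrightarrow> \<not> (delta ^^ i) v 0"
    and j: "j + 2 ^ k \<le> n"
  shows "v (j + 2 ^ k) = v j"
proof -
  define d where "d = (\<lambda>j. v j \<noteq> v (j + 2 ^ k))"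
  have d_delta: "\<not> (delta ^^ m) d 0" if "m + 2 ^ k \<le> n" for m
    using vanish[of "m + 2 ^ k"] that unfolding d_def delta_shift by simp
  have "\<not> d j" using j
  proof (induction j rule: less_induct)
    case (less j)
    then have "(delta ^^ j) d 0 = d j" using delta_first_nonzero[of j d 0] by simp
    then show ?case using d_delta less.prems by simp
  qed
  then show ?thesis unfolding d_def by simp
qed

lemma periodic_on_mod:
  fixes v :: "nat \<Rightarrow> 'a"
  assumes per: "\<And>j. j + P \<le> n \<Longrightarrow> v (j + P) = v j" and "0 < P" "w \<le> n"
  shows "v w = v (w mod P)"
  using \<open>w \<le> n\<close>
proof (induction w rule: less_induct)
  case (less w)
  show ?case
  proof (cases "w < P")
    case False
    then have "v w = v (w - P)" using per[of "w - P"] less.prems by simp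
    also have "\<dots> = v ((w - P) mod P)" using less \<open>0 < P\<close> False by simp
    finally show ?thesis using False by (simp add: le_mod_geq)
  qed simp
qed

lemma mod_double_cases: "w mod (2 * H) = w mod H \<or> w mod (2 * H) = w mod H + (H::nat)"
proof -
  have "w mod (H * 2) = H * (w div H mod 2) + w mod H" by (rule mod_mult2_eq)
  moreover have "w div H mod 2 = 0 \<or> w div H mod 2 = 1" by auto
  ultimately show ?thesis by (auto simp: mult.commute)
qed

lemma alternating_of_mod:
  fixes v :: "nat \<Rightarrow> 'a" and H :: nat
  assumes "0 < H"
    and vmod: "\<And>w. w \<le> n \<Longrightarrow> v w = v (w mod (2 * H))"
    and alt: "\<And>r. r < H \<Longrightarrow> v r \<noteq> v (r + H)"
    and j: "j + H \<le> n"
  shows "v j \<noteq> v (j + H)"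
proof -
  define r where "r = j mod (2 * H)"
  have r: "r < 2 * H" unfolding r_def using \<open>0 < H\<close> by simp
  have vj: "v j = v r" unfolding r_def using vmod j by simp
  have vjH: "v (j + H) = v ((r + H) mod (2 * H))"
    using vmod[of "j + H"] j unfolding r_def by (simp add: mod_add_left_eq)
  show ?thesis
  proof (cases "r < H")
    case True
    then show ?thesis using vj vjH alt[of r] by simp
  next
    case False
    then have "(r + H) mod (2 * H) = r - H" "r - H < H" "r - H + H = r"
      using r by (simp_all add: le_mod_geq)
    then show ?thesis using vj vjH alt[of "r - H"] by simp
  qed
qed

section \<open>ANF and degree of functions depending only on the weight\<close>

definition has_value_vector :: "nat \<Rightarrow> boolfun \<Rightarrow> (nat \<Rightarrow> bool) \<Rightarrow> bool" where
  "has_value_vector n g u \<longleftrightarrow> (\<forall>T. T \<subseteq> {..<n} \<longrightarrow> g T = u (card T))"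

lemma anf_coeff_weight:
  assumes "S \<subseteq> {..<n}" and g: "has_value_vector n g u"
  shows "anf_coeff g S = (delta ^^ card S) u 0"
proof -
  have "{T. T \<subseteq> S \<and> g T} = {T. T \<subseteq> S \<and> u (card T)}"
    using assms unfolding has_value_vector_def by blast
  moreover have "finite S" using assms(1) finite_subset by blast
  ultimately show ?thesis unfolding anf_coeff_def using odd_card_subsets_delta by simp
qed

lemma finite_degree_set: "finite ({card S |S. S \<subseteq> {..<n} \<and> anf_coeff g S} \<union> {0})"
proof -
  have "{card S |S. S \<subseteq> {..<n} \<and> anf_coeff g S} \<subseteq> {..n}"
    using card_mono[of "{..<n}"] by auto
  then show ?thesis using finite_subset by blast
qed

lemma alg_deg_less_iff:
  assumes "0 < m"
  shows "alg_deg n g < m \<longleftrightarrow> (\<forall>S. S \<subseteq> {..<n} \<longrightarrow> anf_coeff g S \<longrightarrow> card S < m)"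
  unfolding alg_deg_def using assms finite_degree_set[of n g] by (auto simp: Max_less_iff)

lemma alg_deg_weight_less_iff:
  assumes g: "has_value_vector n g u" and "0 < m"
  shows "alg_deg n g < m \<longleftrightarrow> (\<forall>i. m \<le> i \<longrightarrow> i \<le> n \<longrightarrow> \<not> (delta ^^ i) u 0)"
proof -
  have card_le: "card S \<le> n" if "S \<subseteq> {..<n}" for S
    using card_mono[OF _ that] by simp
  have "(\<forall>S. S \<subseteq> {..<n} \<longrightarrow> anf_coeff g S \<longrightarrow> card S < m)
      \<longleftrightarrow> (\<forall>i. m \<le> i \<longrightarrow> i \<le> n \<longrightarrow> \<not> (delta ^^ i) u 0)"
  proof (intro iffI allI impI)
    fix i assume all: "\<forall>S. S \<subseteq> {..<n} \<longrightarrow> anf_coeff g S \<longrightarrow> card S < m"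
      and i: "m \<le> i" "i \<le> n"
    then show "\<not> (delta ^^ i) u 0"
      using all[rule_format, of "{..<i}"] anf_coeff_weight[OF _ g, of "{..<i}"] by auto
  next
    fix S assume all: "\<forall>i. m \<le> i \<longrightarrow> i \<le> n \<longrightarrow> \<not> (delta ^^ i) u 0"
      and S: "S \<subseteq> {..<n}" "anf_coeff g S"
    then show "card S < m"
      using anf_coeff_weight[OF S(1) g] card_le[OF S(1)] by (meson not_le)
  qed
  then show ?thesis using alg_deg_less_iff[OF \<open>0 < m\<close>] by simp
qed

lemma alg_deg_periodic:
  assumes g: "has_value_vector n g u"
    and per: "\<And>j. u (j + 2 ^ s) = u j"
  shows "alg_deg n g < 2 ^ s"
proof -
  have "\<not> (delta ^^ i) u 0" if "2 ^ s \<le> i" for i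
  proof -
    have "(delta ^^ i) u 0 = (delta ^^ (i - 2 ^ s)) (\<lambda>_. False) 0"
      using that delta_shift[of "i - 2 ^ s" s u] per by simp
    then show ?thesis by (simp add: delta_const)
  qed
  then show ?thesis using alg_deg_weight_less_iff[OF g] by simp
qed

lemma alg_deg_alternating:
  assumes g: "has_value_vector n g u"
    and alt: "\<And>j. j + 2 ^ s \<le> n \<Longrightarrow> u j \<noteq> u (j + 2 ^ s)"
  shows "alg_deg n g \<le> 2 ^ s"
proof -
  have "\<not> (delta ^^ i) u 0" if "2 ^ s + 1 \<le> i" "i \<le> n" for i
  proof -
    have "(delta ^^ i) u 0 = (delta ^^ (i - 2 ^ s)) (\<lambda>j. u j \<noteq> u (j + 2 ^ s)) 0"
      using that delta_shift[of "i - 2 ^ s" s u] by simp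
    also have "\<dots> = (delta ^^ (i - 2 ^ s)) (\<lambda>_. True) 0"
      using that alt by (intro delta_local) simp
    finally show ?thesis using that by (simp add: delta_const)
  qed
  then have "alg_deg n g < 2 ^ s + 1" using alg_deg_weight_less_iff[OF g] by simp
  then show ?thesis by simp
qed

section \<open>Annihilators of symmetric functions\<close>

lemma alg_immunity_le:
  assumes "nonzero_bf n g" "annihilates n g f \<or> annihilates n g (\<lambda>x. \<not> f x)"
  shows "alg_immunity n f \<le> alg_deg n g"
  unfolding alg_immunity_def using assms by (intro Least_le) blast

definition value_vector :: "boolfun \<Rightarrow> nat \<Rightarrow> bool" where
  "value_vector f j = f {..<j}"

lemma symmetric_value_vector:
  assumes "symmetric_bf n f"
  shows "has_value_vector n f (value_vector f)"
  unfolding has_value_vector_def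
proof (intro allI impI)
  fix T assume T: "T \<subseteq> {..<n}"
  then have "card T \<le> n" using card_mono[of "{..<n}" T] by simp
  then have "{..<card T} \<subseteq> {..<n}" "card {..<card T} = card T" by auto
  then show "f T = value_vector f (card T)"
    using assms T unfolding symmetric_bf_def value_vector_def by blast
qed

text \<open>A 2^s-periodic weight sequence u that is nonzero on 0..n and forces a constant
  value of the value vector v of f gives an annihilator of f or f + 1, so AI(f) < 2^s.\<close>
lemma alg_immunity_lt_periodic_annihilator:
  assumes f: "has_value_vector n f v"
    and per: "\<And>j. u (j + 2 ^ s) = u j"
    and nz: "u r" "r \<le> n"
    and const: "\<And>j. j \<le> n \<Longrightarrow> u j \<Longrightarrow> v j = c"
  shows "alg_immunity n f < 2 ^ s"
proof -
  define g :: boolfun where "g T = u (card T)" for T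
  have g: "has_value_vector n g u" unfolding has_value_vector_def g_def by simp
  have nonzero: "nonzero_bf n g"
    unfolding nonzero_bf_def g_def using nz by (auto intro!: exI[of _ "{..<r}"])
  have "f x = c" if x: "x \<subseteq> {..<n}" and "g x" for x
  proof -
    have "card x \<le> n" using card_mono[OF _ x] by simp
    then show ?thesis using f x \<open>g x\<close> const unfolding has_value_vector_def g_def by auto
  qed
  then have "annihilates n g f \<or> annihilates n g (\<lambda>x. \<not> f x)"
    unfolding annihilates_def by (cases c) auto
  with nonzero have "alg_immunity n f \<le> alg_deg n g" by (rule alg_immunity_le)
  also have "\<dots> < 2 ^ s" using g per by (rule alg_deg_periodic)
  finally show ?thesis .
qed

text \<open>If the value vector of f alternates with period 2^s \<le> n, then f itself is a
  nonzero annihilator of f + 1 of degree \<le> 2^s.\<close>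
lemma alg_immunity_le_alternating:
  assumes f: "has_value_vector n f v"
    and alt: "\<And>j. j + 2 ^ s \<le> n \<Longrightarrow> v j \<noteq> v (j + 2 ^ s)"
    and "2 ^ s \<le> n"
  shows "alg_immunity n f \<le> 2 ^ s"
proof -
  obtain j where j: "j \<le> 2 ^ s" "v j" using alt[of 0] \<open>2 ^ s \<le> n\<close> by (cases "v 0") auto
  then have sub: "{..<j} \<subseteq> {..<n}" using \<open>2 ^ s \<le> n\<close> by auto
  then have "f {..<j}" using f j unfolding has_value_vector_def by simp
  with sub have "nonzero_bf n f" unfolding nonzero_bf_def by blast
  then have "alg_immunity n f \<le> alg_deg n f"
    by (intro alg_immunity_le) (auto simp: annihilates_def)
  also have "\<dots> \<le> 2 ^ s" using f alt by (rule alg_deg_alternating)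
  finally show ?thesis .
qed

lemma alg_immunity_le_half_period:
  assumes f: "has_value_vector n f v"
    and vmod: "\<And>w. w \<le> n \<Longrightarrow> v w = v (w mod 2 ^ k)"
    and "2 ^ k \<le> n"
  shows "alg_immunity n f \<le> 2 ^ k div 2"
proof (cases k)
  case 0
  then have v_const: "v j = v 0" if "j \<le> n" for j using vmod[OF that] by simp
  have "alg_immunity n f < 2 ^ 0"
    by (rule alg_immunity_lt_periodic_annihilator[OF f, where u = "\<lambda>_. True" and r = 0 and c = "v 0"])
      (use v_const in blast)+
  then show ?thesis by simp
next
  case (Suc s)
  define H :: nat where "H = 2 ^ s"
  have PH: "2 ^ k = 2 * H" and "H \<le> n" and "0 < H" using Suc \<open>2 ^ k \<le> n\<close> by (simp_all add: H_def)
  show ?thesis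
  proof (cases "\<exists>r<H. v r = v (r + H)")
    case True
    then obtain r where r: "r < H" "v r = v (r + H)" by blast
    define u where "u j \<longleftrightarrow> v (j mod H) = v r \<and> v (j mod H + H) = v r" for j
    have "u (j + 2 ^ s) = u j" for j unfolding u_def H_def by simp
    moreover have "u r" "r \<le> n" using r \<open>H \<le> n\<close> by (simp_all add: u_def)
    moreover have "v j = v r" if "j \<le> n" "u j" for j
      using vmod[OF \<open>j \<le> n\<close>] mod_double_cases[of j H] that unfolding PH u_def by auto
    ultimately have "alg_immunity n f < H"
      unfolding H_def by (rule alg_immunity_lt_periodic_annihilator[OF f])
    then show ?thesis using PH by simp
  next
    case False
    have alt: "v j \<noteq> v (j + H)" if "j + H \<le> n" for j
    proof (rule alternating_of_mod[OF \<open>0 < H\<close> _ _ that])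
      show "v w = v (w mod (2 * H))" if "w \<le> n" for w using vmod[OF that] PH by simp
      show "v r \<noteq> v (r + H)" if "r < H" for r using False that by blast
    qed
    have "alg_immunity n f \<le> H"
      using alt \<open>H \<le> n\<close> unfolding H_def by (intro alg_immunity_le_alternating[OF f]) auto
    then show ?thesis using PH by simp
  qed
qed

lemma value_vector_periodic:
  assumes f: "has_value_vector n f v"
    and deg: "alg_deg n f < 2 ^ k" and "w \<le> n"
  shows "v w = v (w mod 2 ^ k)"
proof -
  have "\<And>i. 2 ^ k \<le> i \<Longrightarrow> i \<le> n \<Longrightarrow> \<not> (delta ^^ i) v 0"
    using deg alg_deg_weight_less_iff[OF f] by simp
  then have "\<And>j. j + 2 ^ k \<le> n \<Longrightarrow> v (j + 2 ^ k) = v j"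
    by (rule periodic_of_high_delta_vanish)
  then show ?thesis using \<open>w \<le> n\<close> by (intro periodic_on_mod) auto
qed

lemma half_less_ceiling:
  assumes "P < n"
  shows "P div 2 < nat \<lceil>real n / 2\<rceil>"
proof -
  have "2 * (P div 2) < n" using assms by linarith
  then have "real (P div 2) < real n / 2" by linarith
  also have "\<dots> \<le> of_int \<lceil>real n / 2\<rceil>" by (rule le_of_int_ceiling)
  finally show ?thesis by linarith
qed

theorem corollary9:
  fixes n :: nat and f :: boolfun
  assumes "n \<ge> 2"
    and "symmetric_bf n f"
    and "alg_immunity n f = nat \<lceil>real n / 2\<rceil>"
  shows "alg_deg n f \<ge> 2 ^ nat \<lfloor>log 2 (real (n - 1))\<rfloor>"
proof -
  define k where "k = floor_log (n - 1)"
  have k: "nat \<lfloor>log 2 (real (n - 1))\<rfloor> = k"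
    unfolding k_def using assms(1) by (simp add: floor_log_altdef)
  have P_le: "2 ^ k \<le> n - 1"
    unfolding k_def using assms(1) floor_log_exp2_le[of "n - 1"] by simp
  have f: "has_value_vector n f (value_vector f)"
    using assms(2) by (rule symmetric_value_vector)
  show ?thesis unfolding k
  proof (rule ccontr)
    assume "\<not> 2 ^ k \<le> alg_deg n f"
    then have "\<And>w. w \<le> n \<Longrightarrow> value_vector f w = value_vector f (w mod 2 ^ k)"
      by (intro value_vector_periodic[OF f]) auto
    then have "alg_immunity n f \<le> 2 ^ k div 2"
      using P_le by (intro alg_immunity_le_half_period[OF f]) auto
    moreover have "2 ^ k div 2 < nat \<lceil>real n / 2\<rceil>"
      using P_le assms(1) by (intro half_less_ceiling) simp
    ultimately show False using assms(3) by linarith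
  qed
qed

end
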